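(* Let $\widetilde{E(2)}$, $\Omega$ and the functions below be as in the context, and let $(c,\theta)\in\Omega$. Define $X=(x_1,x_2,x_3):\mathbb{C}\to\widetilde{E(2)}$ by $$x_3(u+iv)=-\lambda_1\lambda_2Dv+\lambda_1\lambda_2G(u),$$ $$x_1(u+iv)=-\frac{1}{(c^2+\lambda_1^2\lambda_2^2D^2)B}\Big[\tfrac{1}{\lambda_1}f'(u)\cos\varphi(u)M_1-\tfrac{1}{\lambda_1}(c-\varphi'(u))\sin\varphi(u)M_2-\tfrac{1}{\lambda_2}(c-\varphi'(u))\cos\varphi(u)M_3-\tfrac{1}{\lambda_2}f'(u)\sin\varphi(u)M_4\Big],$$ $$x_2(u+iv)=-\frac{1}{(c^2+\lambda_1^2\lambda_2^2D^2)B}\Big[\tfrac{1}{\lambda_1}f'(u)\cos\varphi(u)M_4-\tfrac{1}{\lambda_1}(c-\varphi'(u))\sin\varphi(u)M_3+\tfrac{1}{\lambda_2}(c-\varphi'(u))\cos\varphi(u)M_2+\tfrac{1}{\lambda_2}f'(u)\sin\varphi(u)M_1\Big],$$ where $B=B(u)$, $A=f(u)+cv$, $x_3=x_3(u+iv)$ and $M_1=c\cos x_3\cosh A-\lambda_1\lambda_2D\sin x_3\sinh A$, $M_2=c\cos x_3\sinh A-\lambda_1\lambda_2D\sin x_3\cosh A$, $M_3=c\sin x_3\sinh A+\lambda_1\lambda_2D\cos x_3\cosh A$, $M_4=c\sin x_3\cosh A+\lambda_1\lambda_2D\cos x_3\sinh A$. Then $X$ is a conformal minimal immersion from $\mathbb{C}$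 into $\widetilde{E(2)}$ whose Gauss map (for a suitable choice of unit normal) is $g(u+iv)=e^{f(u)+cv}e^{i\varphi(u)}$.
   Context: $\widetilde{E(2)}$ is $\mathbb{R}^3$ with coordinates $(x_1,x_2,x_3)$ and group law $(a_1,b_1,c_1)*(a_2,b_2,c_2)=(a_1+a_2\cos c_1-b_2\sin c_1,\ b_1+a_2\sin c_1+b_2\cos c_1,\ c_1+c_2)$, with the left-invariant metric $\lambda_1^2(\cos x_3\,dx_1+\sin x_3\,dx_2)^2+\lambda_2^2(-\sin x_3\,dx_1+\cos x_3\,dx_2)^2+\frac{1}{\lambda_1^2\lambda_2^2}dx_3^2$, where either $\lambda_1>\lambda_2>0$ or $\lambda_1=\lambda_2=1$. Its left-invariant orthonormal frame is $E_1=\frac{1}{\lambda_1}(\cos x_3\partial_{x_1}+\sin x_3\partial_{x_2})$, $E_2=\frac{1}{\lambda_2}(-\sin x_3\partial_{x_1}+\cos x_3\partial_{x_2})$, $E_3=\lambda_1\lambda_2\partial_{x_3}$; for an immersed surface with unit normal $N=N_1E_1+N_2E_2+N_3E_3$ the Gauss map is $g=\frac{N_1+iN_2}{1+N_3}$. For $c>0$ set $\theta_c^+=\pi$ if $c>\sqrt2\lambda_1$ and $\theta_c^+=\arccos(1-c^2/\lambda_1^2)\in(0,\pi]$ if $0<c\le\sqrt2\lambda_1$; $\Omega=\{(c,\theta)\in\mathbb{R}^2: c>0,\ \theta\in(-\theta_c^+,\theta_c^+)\}$. For $(c,\theta)\in\Omega$ let $D=\sin\theta/c$, let $\varphi:\mathbb{R}\to\mathbb{R}$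 be the (globally defined) solution of $\varphi'(u)=\sqrt{c^2+2\cos\theta\,B(u)-D^2B(u)^2}$, $\varphi(0)=0$, where $B(u)=\lambda_1^2\cos^2\varphi(u)+\lambda_2^2\sin^2\varphi(u)$; let $f$ be the solution of $f'(u)=DB(u)$, $f(0)=0$; and let $G(u)=\int_0^u\frac{c-\varphi'(s)}{B(s)}\,ds$. *)

theory Defs
  imports "HOL-Analysis.Analysis"
begin

text \<open>Points and tangent vectors are elements of real^3; components p$1, p$2, p$3
  correspond to the coordinates x1, x2, x3.\<close>

definition admissible_lambdas :: "real \<Rightarrow> real \<Rightarrow> bool" where
  "admissible_lambdas l1 l2 \<longleftrightarrow> (l1 > l2 \<and> l2 > 0) \<or> (l1 = 1 \<and> l2 = 1)"

definition metric :: "real \<Rightarrow> real \<Rightarrow> real^3 \<Rightarrow> real^3 \<Rightarrow> real^3 \<Rightarrow> real" where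
  "metric l1 l2 p a b =
     l1\<^sup>2 * (cos (p$3) * a$1 + sin (p$3) * a$2) * (cos (p$3) * b$1 + sin (p$3) * b$2)
   + l2\<^sup>2 * (- sin (p$3) * a$1 + cos (p$3) * a$2) * (- sin (p$3) * b$1 + cos (p$3) * b$2)
   + (a$3 * b$3) / (l1\<^sup>2 * l2\<^sup>2)"

definition metric_matrix :: "real \<Rightarrow> real \<Rightarrow> real^3 \<Rightarrow> real^3^3" where
  "metric_matrix l1 l2 p = (\<chi> i j. metric l1 l2 p (axis i 1) (axis j 1))"

definition metric_partial :: "real \<Rightarrow> real \<Rightarrow> real^3 \<Rightarrow> 3 \<Rightarrow> 3 \<Rightarrow> 3 \<Rightarrow> real" where
  "metric_partial l1 l2 p i j l =
     deriv (\<lambda>t. metric_matrix l1 l2 (p + t *\<^sub>R axis l 1) $ i $ j) 0"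

definition christoffel :: "real \<Rightarrow> real \<Rightarrow> real^3 \<Rightarrow> 3 \<Rightarrow> 3 \<Rightarrow> 3 \<Rightarrow> real" where
  "christoffel l1 l2 p k i j =
     (1/2) * (\<Sum>m\<in>UNIV. matrix_inv (metric_matrix l1 l2 p) $ k $ m *
        (metric_partial l1 l2 p j m i + metric_partial l1 l2 p i m j
         - metric_partial l1 l2 p i j m))"

text \<open>Left-invariant orthonormal frame E1, E2, E3 at the point p.\<close>
definition frame :: "real \<Rightarrow> real \<Rightarrow> real^3 \<Rightarrow> 3 \<Rightarrow> real^3" where
  "frame l1 l2 p k =
     (if k = 1 then (\<chi> i. if i = 1 then cos (p$3) / l1 else if i = 2 then sin (p$3) / l1 else 0)
      else if k = 2 then (\<chi> i. if i = 1 then - sin (p$3) / l2 else if i = 2 then cos (p$3) / l2 else 0)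
      else (\<chi> i. if i = 3 then l1 * l2 else 0))"

definition partial_u :: "(complex \<Rightarrow> real^3) \<Rightarrow> complex \<Rightarrow> real^3" where
  "partial_u X z = vector_derivative (\<lambda>t. X (z + complex_of_real t)) (at 0)"

definition partial_v :: "(complex \<Rightarrow> real^3) \<Rightarrow> complex \<Rightarrow> real^3" where
  "partial_v X z = vector_derivative (\<lambda>t. X (z + \<i> * complex_of_real t)) (at 0)"

text \<open>Covariant derivative along X of the vector field W (along X), in the direction
  of the coordinate vector field with coordinate derivative operator d and
  corresponding tangent vector dX:  (nabla W)^k = d W^k + Gamma^k_ij dX^i W^j.\<close>
definition cov_deriv ::
  "real \<Rightarrow> real \<Rightarrow> (complex \<Rightarrow> real^3) \<Rightarrow> ((complex \<Rightarrow> real^3) \<Rightarrow> complex \<Rightarrow> real^3)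
     \<Rightarrow> (complex \<Rightarrow> real^3) \<Rightarrow> complex \<Rightarrow> real^3" where
  "cov_deriv l1 l2 X d W z =
     (\<chi> k. d W z $ k + (\<Sum>i\<in>UNIV. \<Sum>j\<in>UNIV.
        christoffel l1 l2 (X z) k i j * d X z $ i * W z $ j))"

definition C2_immersion :: "(complex \<Rightarrow> real^3) \<Rightarrow> bool" where
  "C2_immersion X \<longleftrightarrow>
     (\<forall>z. X differentiable (at z)) \<and>
     (\<forall>z. partial_u X differentiable (at z)) \<and>
     (\<forall>z. partial_v X differentiable (at z)) \<and>
     continuous_on UNIV (partial_u X) \<and> continuous_on UNIV (partial_v X) \<and>
     continuous_on UNIV (partial_u (partial_u X)) \<and> continuous_on UNIV (partial_v (partial_u X)) \<and>
     continuous_on UNIV (partial_u (partial_v X)) \<and> continuous_on UNIV (partial_v (partial_v X)) \<and>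
     (\<forall>z. independent {partial_u X z, partial_v X z} \<and> partial_u X z \<noteq> partial_v X z)"

definition conformal :: "real \<Rightarrow> real \<Rightarrow> (complex \<Rightarrow> real^3) \<Rightarrow> bool" where
  "conformal l1 l2 X \<longleftrightarrow> (\<forall>z.
     metric l1 l2 (X z) (partial_u X z) (partial_u X z) = metric l1 l2 (X z) (partial_v X z) (partial_v X z) \<and>
     metric l1 l2 (X z) (partial_u X z) (partial_v X z) = 0)"

text \<open>Minimality: the mean curvature vector vanishes, i.e. the trace of the second
  fundamental form  g^{ab} nabla_a X_b  (E, F, G the first fundamental form) has no
  normal component, i.e. it lies in the span of X_u, X_v.\<close>
definition minimal_surface :: "real \<Rightarrow> real \<Rightarrow> (complex \<Rightarrow> real^3) \<Rightarrow> bool" where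
  "minimal_surface l1 l2 X \<longleftrightarrow> (\<forall>z.
     (let E = metric l1 l2 (X z) (partial_u X z) (partial_u X z);
          F = metric l1 l2 (X z) (partial_u X z) (partial_v X z);
          G = metric l1 l2 (X z) (partial_v X z) (partial_v X z);
          tau = (1 / (E * G - F\<^sup>2)) *\<^sub>R
                  (G *\<^sub>R cov_deriv l1 l2 X partial_u (partial_u X) z
                   - (2 * F) *\<^sub>R cov_deriv l1 l2 X partial_u (partial_v X) z
                   + E *\<^sub>R cov_deriv l1 l2 X partial_v (partial_v X) z)
      in tau \<in> span {partial_u X z, partial_v X z}))"

definition conformal_minimal_immersion :: "real \<Rightarrow> real \<Rightarrow> (complex \<Rightarrow> real^3) \<Rightarrow> bool" where
  "conformal_minimal_immersion l1 l2 X \<longleftrightarrow>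
     C2_immersion X \<and> conformal l1 l2 X \<and> minimal_surface l1 l2 X"

text \<open>N is a unit normal along X with frame components n (N = n1 E1 + n2 E2 + n3 E3),
  and the Gauss map (n1 + i n2)/(1 + n3) equals g.\<close>
definition has_gauss_map ::
  "real \<Rightarrow> real \<Rightarrow> (complex \<Rightarrow> real^3) \<Rightarrow> (complex \<Rightarrow> complex) \<Rightarrow> bool" where
  "has_gauss_map l1 l2 X g \<longleftrightarrow> (\<exists>N n :: complex \<Rightarrow> real^3. \<forall>z.
     N z = (\<Sum>k\<in>UNIV. n z $ k *\<^sub>R frame l1 l2 (X z) k) \<and>
     metric l1 l2 (X z) (N z) (N z) = 1 \<and>
     metric l1 l2 (X z) (N z) (partial_u X z) = 0 \<and>
     metric l1 l2 (X z) (N z) (partial_v X z) = 0 \<and>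
     g z = Complex (n z $ 1) (n z $ 2) / complex_of_real (1 + n z $ 3))"

definition theta_plus :: "real \<Rightarrow> real \<Rightarrow> real" where
  "theta_plus l1 c = (if c > sqrt 2 * l1 then pi else arccos (1 - c\<^sup>2 / l1\<^sup>2))"

definition Omega :: "real \<Rightarrow> (real \<times> real) set" where
  "Omega l1 = {(c, \<theta>). c > 0 \<and> - theta_plus l1 c < \<theta> \<and> \<theta> < theta_plus l1 c}"

definition Bfun :: "real \<Rightarrow> real \<Rightarrow> (real \<Rightarrow> real) \<Rightarrow> real \<Rightarrow> real" where
  "Bfun l1 l2 \<phi> u = l1\<^sup>2 * (cos (\<phi> u))\<^sup>2 + l2\<^sup>2 * (sin (\<phi> u))\<^sup>2"

definition Gfun :: "real \<Rightarrow> real \<Rightarrow> real \<Rightarrow> (real \<Rightarrow> real) \<Rightarrow> real \<Rightarrow> real" where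
  "Gfun l1 l2 c \<phi> u =
     (let h = (\<lambda>s. (c - deriv \<phi> s) / Bfun l1 l2 \<phi> s)
      in if 0 \<le> u then integral {0..u} h else - integral {u..0} h)"

definition Xmap :: "real \<Rightarrow> real \<Rightarrow> real \<Rightarrow> real \<Rightarrow> (real \<Rightarrow> real) \<Rightarrow> (real \<Rightarrow> real)
                    \<Rightarrow> complex \<Rightarrow> real^3" where
  "Xmap l1 l2 c \<theta> \<phi> f z =
    (let u = Re z; v = Im z; D = sin \<theta> / c; L = l1 * l2;
         B = Bfun l1 l2 \<phi> u; A = f u + c * v;
         x3 = - L * D * v + L * Gfun l1 l2 c \<phi> u;
         M1 = c * cos x3 * cosh A - L * D * sin x3 * sinh A;
         M2 = c * cos x3 * sinh A - L * D * sin x3 * cosh A;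
         M3 = c * sin x3 * sinh A + L * D * cos x3 * cosh A;
         M4 = c * sin x3 * cosh A + L * D * cos x3 * sinh A;
         fp = deriv f u; pp = deriv \<phi> u; K = c\<^sup>2 + L\<^sup>2 * D\<^sup>2;
         x1 = - (1 / (K * B)) *
              ((1/l1) * fp * cos (\<phi> u) * M1 - (1/l1) * (c - pp) * sin (\<phi> u) * M2
               - (1/l2) * (c - pp) * cos (\<phi> u) * M3 - (1/l2) * fp * sin (\<phi> u) * M4);
         x2 = - (1 / (K * B)) *
              ((1/l1) * fp * cos (\<phi> u) * M4 - (1/l1) * (c - pp) * sin (\<phi> u) * M3
               + (1/l2) * (c - pp) * cos (\<phi> u) * M2 + (1/l2) * fp * sin (\<phi> u) * M1)
     in (\<chi> i. if i = 1 then x1 else if i = 2 then x2 else x3))"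

end

(* In the left-invariant frame E1, E2, E3 the partial derivatives of X are
     X_u = a1 E1 + a2 E2 + G' E3  and  X_v = b1 E1 + b2 E2 - D E3,
   where (a1, a2) and (b1, b2) are (G' sinh A, -D cosh A) and (-D sinh A, -G' cosh A)
   rotated by the angle phi, and A = f(u) + c v. Rotations preserve inner products, so
   |X_u|^2 = |X_v|^2 = (D^2 + G'^2) cosh^2 A and X_u, X_v are orthogonal: X is conformal.
   Since phi' = c - B G', the ODEs turn the derivatives of a and b into a linear system in
   a and b. Together with the Christoffel term (l1^2 - l2^2) (a2 a3, a1 a3, -a1 a2) of a
   velocity a1 E1 + a2 E2 + a3 E3 this gives nabla_u X_u + nabla_v X_v = 0, the vertical part
   cancelling because G'' = (l2^2 - l1^2) (D^2 + G'^2) sin phi cos phi along the ODE. A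
   conformal harmonic immersion is minimal. The unit normal has frame components
   (cos phi, sin phi, -sinh A) / cosh A, whose stereographic projection is e^A e^(i phi). *)

theory Submission
  imports Defs
begin

definition rot1 :: "real \<Rightarrow> real \<Rightarrow> real \<Rightarrow> real" where
  "rot1 t p q = cos t * p - sin t * q"

definition rot2 :: "real \<Rightarrow> real \<Rightarrow> real \<Rightarrow> real" where
  "rot2 t p q = sin t * p + cos t * q"

lemma rot_inner: "rot1 t p q * rot1 t p' q' + rot2 t p q * rot2 t p' q' = p * p' + q * q'"
proof -
  have "(sin t)\<^sup>2 + (cos t)\<^sup>2 = 1" by simp
  then show ?thesis unfolding rot1_def rot2_def by algebra
qed

lemma has_real_derivative_rot1:
  assumes "(x has_real_derivative x') (at t within S)" "(p has_real_derivative p') (at t within S)"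
    "(q has_real_derivative q') (at t within S)"
  shows "((\<lambda>t. rot1 (x t) (p t) (q t)) has_real_derivative
           rot1 (x t) (p' - x' * q t) (q' + x' * p t)) (at t within S)"
  unfolding rot1_def by (rule derivative_eq_intros assms refl)+ (simp add: algebra_simps)

lemma has_real_derivative_rot2:
  assumes "(x has_real_derivative x') (at t within S)" "(p has_real_derivative p') (at t within S)"
    "(q has_real_derivative q') (at t within S)"
  shows "((\<lambda>t. rot2 (x t) (p t) (q t)) has_real_derivative
           rot2 (x t) (p' - x' * q t) (q' + x' * p t)) (at t within S)"
  unfolding rot2_def by (rule derivative_eq_intros assms refl)+ (simp add: algebra_simps)

lemma vector3_eq_iff: "(x :: real^3) = vector [a, b, c] \<longleftrightarrow> x $ 1 = a \<and> x $ 2 = b \<and> x $ 3 = c"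
  by (auto simp: vec_eq_iff forall_3)

lemma vector3_eq_axis: "(vector [a, b, c] :: real^3) = a *\<^sub>R axis 1 1 + b *\<^sub>R axis 2 1 + c *\<^sub>R axis 3 1"
  by (simp add: vec_eq_iff forall_3 axis_def)

lemma has_derivative_vector3 [derivative_intros]:
  assumes "(f1 has_derivative f1') F" "(f2 has_derivative f2') F" "(f3 has_derivative f3') F"
  shows "((\<lambda>x. vector [f1 x, f2 x, f3 x] :: real^3) has_derivative (\<lambda>h. vector [f1' h, f2' h, f3' h])) F"
  unfolding vector3_eq_axis by (intro derivative_intros assms)

lemma has_vector_derivative_vector3:
  assumes "(f1 has_real_derivative d1) F" "(f2 has_real_derivative d2) F" "(f3 has_real_derivative d3) F"
  shows "((\<lambda>x. vector [f1 x, f2 x, f3 x] :: real^3) has_vector_derivative vector [d1, d2, d3]) F"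
proof -
  have "(\<lambda>h. vector [h * d1, h * d2, h * d3]) = (\<lambda>h. h *\<^sub>R (vector [d1, d2, d3] :: real^3))"
    by (simp add: fun_eq_iff vec_eq_iff forall_3)
  then show ?thesis
    using has_derivative_vector3[OF assms[unfolded has_field_derivative_def]]
    by (simp add: has_vector_derivative_def mult.commute)
qed

lemma differentiable_vector3 [derivative_intros]:
  "f1 differentiable F \<Longrightarrow> f2 differentiable F \<Longrightarrow> f3 differentiable F \<Longrightarrow>
    (\<lambda>x. vector [f1 x, f2 x, f3 x] :: real^3) differentiable F"
  unfolding differentiable_def by (blast intro: has_derivative_vector3)

lemma differentiable_compose_real:
  assumes "\<And>y. (h has_real_derivative h' y) (at y)" and "g differentiable (at x within S)"
  shows "(\<lambda>x. h (g x)) differentiable (at x within S)"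
  using assms(1)[unfolded has_field_derivative_def]
  by (intro differentiable_compose[OF _ assms(2)] differentiableI)

lemma differentiable_Re_Im [derivative_intros]: "Re differentiable F" "Im differentiable F"
  by (simp_all add: bounded_linear_imp_differentiable bounded_linear_Re bounded_linear_Im)

lemmas differentiable_trig [derivative_intros] =
  differentiable_compose_real[OF DERIV_sin] differentiable_compose_real[OF DERIV_cos]
  differentiable_compose_real[OF has_field_derivative_sinh[OF DERIV_ident, simplified]]
  differentiable_compose_real[OF has_field_derivative_cosh[OF DERIV_ident, simplified]]

lemma continuous_on_UNIV_if_differentiable:
  "(\<And>z. g differentiable (at z)) \<Longrightarrow> continuous_on UNIV g"
  by (simp add: differentiable_imp_continuous_on differentiable_on_def)

section \<open>The left-invariant frame and the Levi-Civita connection\<close>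

definition frame_vector :: "real \<Rightarrow> real \<Rightarrow> real \<Rightarrow> real \<Rightarrow> real \<Rightarrow> real \<Rightarrow> real^3" where
  "frame_vector l1 l2 x a1 a2 a3 =
     vector [rot1 x (a1 / l1) (a2 / l2), rot2 x (a1 / l1) (a2 / l2), l1 * l2 * a3]"

lemma sum_frame_eq_frame_vector:
  "(\<Sum>k\<in>UNIV. n $ k *\<^sub>R frame l1 l2 p k) = frame_vector l1 l2 (p $ 3) (n $ 1) (n $ 2) (n $ 3)"
  by (simp add: sum_3 frame_def frame_vector_def vector3_eq_iff rot1_def rot2_def algebra_simps)

lemma frame_vector_add:
  "frame_vector l1 l2 x a1 a2 a3 + frame_vector l1 l2 x b1 b2 b3
     = frame_vector l1 l2 x (a1 + b1) (a2 + b2) (a3 + b3)"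
  by (simp add: frame_vector_def vector3_eq_iff rot1_def rot2_def add_divide_distrib algebra_simps)

lemma frame_vector_scaleR:
  "r *\<^sub>R frame_vector l1 l2 x a1 a2 a3 = frame_vector l1 l2 x (r * a1) (r * a2) (r * a3)"
  by (simp add: frame_vector_def vector3_eq_iff rot1_def rot2_def algebra_simps)

lemma frame_vector_zero: "frame_vector l1 l2 x 0 0 0 = 0"
  by (simp add: frame_vector_def vec_eq_iff forall_3 rot1_def rot2_def)

lemma metric_frame_vector:
  assumes "l1 \<noteq> 0" "l2 \<noteq> 0"
  shows "metric l1 l2 p (frame_vector l1 l2 (p $ 3) a1 a2 a3) (frame_vector l1 l2 (p $ 3) b1 b2 b3)
           = a1 * b1 + a2 * b2 + a3 * b3"
proof -
  have pyth: "(sin (p $ 3))\<^sup>2 + (cos (p $ 3))\<^sup>2 = 1" by simp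
  show ?thesis
    using assms unfolding metric_def frame_vector_def rot1_def rot2_def vector_3
    by (simp add: field_simps) (use pyth in algebra)
qed

lemma has_vector_derivative_frame_vector:
  assumes "l1 \<noteq> 0" "l2 \<noteq> 0"
    and "(x has_real_derivative x') (at t within S)"
    and "(a1 has_real_derivative a1') (at t within S)"
    and "(a2 has_real_derivative a2') (at t within S)"
    and "(a3 has_real_derivative a3') (at t within S)"
  shows "((\<lambda>t. frame_vector l1 l2 (x t) (a1 t) (a2 t) (a3 t)) has_vector_derivative
           frame_vector l1 l2 (x t) (a1' - x' * l1 / l2 * a2 t) (a2' + x' * l2 / l1 * a1 t) a3')
           (at t within S)"
proof -
  have "((\<lambda>t. a1 t / l1) has_real_derivative a1' / l1) (at t within S)"
    "((\<lambda>t. a2 t / l2) has_real_derivative a2' / l2) (at t within S)"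
    "((\<lambda>t. l1 * l2 * a3 t) has_real_derivative l1 * l2 * a3') (at t within S)"
    by (auto intro!: derivative_eq_intros assms)
  from has_vector_derivative_vector3[OF
      has_real_derivative_rot1[OF assms(3) this(1,2)] has_real_derivative_rot2[OF assms(3) this(1,2)] this(3)]
  show ?thesis
    unfolding frame_vector_def using assms(1,2) by (simp add: field_simps)
qed

definition coframe1 :: "real \<Rightarrow> 3 \<Rightarrow> real" where
  "coframe1 x i = (if i = 1 then cos x else if i = 2 then sin x else 0)"

definition coframe2 :: "real \<Rightarrow> 3 \<Rightarrow> real" where
  "coframe2 x i = (if i = 1 then - sin x else if i = 2 then cos x else 0)"

lemma coframe_simps [simp]:
  "coframe1 x 1 = cos x" "coframe1 x 2 = sin x" "coframe1 x 3 = 0"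
  "coframe2 x 1 = - sin x" "coframe2 x 2 = cos x" "coframe2 x 3 = 0"
  by (simp_all add: coframe1_def coframe2_def)

lemma metric_matrix_eq:
  "metric_matrix l1 l2 p $ i $ j =
     l1\<^sup>2 * coframe1 (p $ 3) i * coframe1 (p $ 3) j + l2\<^sup>2 * coframe2 (p $ 3) i * coframe2 (p $ 3) j
     + (if i = 3 \<and> j = 3 then 1 / (l1\<^sup>2 * l2\<^sup>2) else 0)"
  using exhaust_3[of i] exhaust_3[of j]
  by (auto simp: metric_matrix_def metric_def axis_def)

lemma metric_partial_eq:
  "metric_partial l1 l2 p i j l =
     (if l = 3 then (l1\<^sup>2 - l2\<^sup>2) * (coframe1 (p $ 3) i * coframe2 (p $ 3) j + coframe2 (p $ 3) i * coframe1 (p $ 3) j)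
      else 0)"
proof (cases "l = 3")
  case True
  have "((\<lambda>t. cos (p $ 3 + t)) has_real_derivative - sin (p $ 3)) (at 0)"
    "((\<lambda>t. sin (p $ 3 + t)) has_real_derivative cos (p $ 3)) (at 0)"
    by (auto intro!: derivative_eq_intros)
  then have "((\<lambda>t. coframe1 (p $ 3 + t) i) has_real_derivative coframe2 (p $ 3) i) (at 0)"
    "((\<lambda>t. coframe2 (p $ 3 + t) i) has_real_derivative - coframe1 (p $ 3) i) (at 0)" for i
    using exhaust_3[of i] by (auto simp: coframe1_def coframe2_def intro: derivative_intros)
  then have "((\<lambda>t. metric_matrix l1 l2 (p + t *\<^sub>R axis 3 1) $ i $ j) has_real_derivative
      (l1\<^sup>2 - l2\<^sup>2) * (coframe1 (p $ 3) i * coframe2 (p $ 3) j + coframe2 (p $ 3) i * coframe1 (p $ 3) j)) (at 0)"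
    unfolding metric_matrix_eq by (auto intro!: derivative_eq_intros simp: axis_def algebra_simps)
  then show ?thesis
    using True unfolding metric_partial_def by (simp add: DERIV_imp_deriv)
next
  case False
  then show ?thesis
    unfolding metric_partial_def metric_matrix_eq by (simp add: axis_def)
qed

lemma matrix_inv_unique:
  fixes A B :: "'a::field^'n^'n"
  assumes "A ** B = mat 1" "B ** A = mat 1"
  shows "matrix_inv A = B"
proof -
  let ?M = "matrix_inv A"
  have "A ** ?M = mat 1 \<and> ?M ** A = mat 1"
    unfolding matrix_inv_def by (rule someI[of _ B]) (use assms in simp)
  then have "?M = ?M ** (A ** B)" "(?M ** A) ** B = B"
    using assms by (simp_all add: matrix_mul_rid matrix_mul_lid)
  then show ?thesis by (simp add: matrix_mul_assoc)
qed

lemma matrix_inv_metric_matrix: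
  assumes "l1 \<noteq> 0" "l2 \<noteq> 0"
  shows "matrix_inv (metric_matrix l1 l2 p) = (\<chi> k m. \<Sum>i\<in>UNIV. frame l1 l2 p i $ k * frame l1 l2 p i $ m)"
proof (rule matrix_inv_unique)
  have pyth: "(sin (p $ 3))\<^sup>2 + (cos (p $ 3))\<^sup>2 = 1" by simp
  show "metric_matrix l1 l2 p ** (\<chi> k m. \<Sum>i\<in>UNIV. frame l1 l2 p i $ k * frame l1 l2 p i $ m) = mat 1"
    and "(\<chi> k m. \<Sum>i\<in>UNIV. frame l1 l2 p i $ k * frame l1 l2 p i $ m) ** metric_matrix l1 l2 p = mat 1"
    unfolding vec_eq_iff matrix_matrix_mult_def mat_def forall_3 sum_3
    using assms by (simp_all add: metric_matrix_eq frame_def field_simps; use pyth in algebra)+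
qed

lemma christoffel_frame_vector:
  assumes "l1 \<noteq> 0" "l2 \<noteq> 0"
  shows "(\<Sum>i\<in>UNIV. \<Sum>j\<in>UNIV. christoffel l1 l2 p k i j
            * frame_vector l1 l2 (p $ 3) a1 a2 a3 $ i * frame_vector l1 l2 (p $ 3) a1 a2 a3 $ j)
         = ((l1\<^sup>2 - l2\<^sup>2) *\<^sub>R frame_vector l1 l2 (p $ 3) (a2 * a3) (a1 * a3) (- a1 * a2)) $ k"
proof -
  have pyth: "(sin (p $ 3))\<^sup>2 + (cos (p $ 3))\<^sup>2 = 1" by simp
  have "\<forall>k\<in>{1, 2, 3}. (\<Sum>i\<in>UNIV. \<Sum>j\<in>UNIV. christoffel l1 l2 p k i j
            * frame_vector l1 l2 (p $ 3) a1 a2 a3 $ i * frame_vector l1 l2 (p $ 3) a1 a2 a3 $ j)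
         = ((l1\<^sup>2 - l2\<^sup>2) *\<^sub>R frame_vector l1 l2 (p $ 3) (a2 * a3) (a1 * a3) (- a1 * a2)) $ k"
    unfolding christoffel_def matrix_inv_metric_matrix[OF assms] metric_partial_eq sum_3 ball_simps
    using assms
    by (simp_all add: frame_def frame_vector_def rot1_def rot2_def field_simps power2_eq_square;
        use pyth in algebra)
  then show ?thesis using exhaust_3[of k] by auto
qed

lemma cov_deriv_frame_vector:
  assumes "l1 \<noteq> 0" "l2 \<noteq> 0" and "d X z = frame_vector l1 l2 (X z $ 3) a1 a2 a3"
  shows "cov_deriv l1 l2 X d (d X) z
           = d (d X) z + (l1\<^sup>2 - l2\<^sup>2) *\<^sub>R frame_vector l1 l2 (X z $ 3) (a2 * a3) (a1 * a3) (- a1 * a2)"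
  unfolding vec_eq_iff cov_deriv_def
  using christoffel_frame_vector[OF assms(1,2), of "X z"] assms(3) by simp

section \<open>Conformal harmonic surfaces\<close>

lemma partial_u_coordinates:
  assumes "\<And>u v. ((\<lambda>u. F u v) has_vector_derivative F\<^sub>u u v) (at u)"
  shows "partial_u (\<lambda>z. F (Re z) (Im z)) = (\<lambda>z. F\<^sub>u (Re z) (Im z))"
proof
  fix z :: complex
  have "(\<lambda>t. F (Re (z + complex_of_real t)) (Im (z + complex_of_real t))) = (\<lambda>u. F u (Im z)) \<circ> (\<lambda>t. Re z + t)"
    by auto
  moreover have "((\<lambda>t. Re z + t) has_vector_derivative 1) (at 0)"
    by (auto intro!: derivative_eq_intros)
  then have "((\<lambda>u. F u (Im z)) \<circ> (\<lambda>t. Re z + t) has_vector_derivative F\<^sub>u (Re z) (Im z)) (at 0)"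
    using vector_diff_chain_at assms by fastforce
  ultimately show "partial_u (\<lambda>z. F (Re z) (Im z)) z = F\<^sub>u (Re z) (Im z)"
    unfolding partial_u_def by (simp add: vector_derivative_at)
qed

lemma partial_v_coordinates:
  assumes "\<And>u v. ((\<lambda>v. F u v) has_vector_derivative F\<^sub>v u v) (at v)"
  shows "partial_v (\<lambda>z. F (Re z) (Im z)) = (\<lambda>z. F\<^sub>v (Re z) (Im z))"
proof
  fix z :: complex
  have "(\<lambda>t. F (Re (z + \<i> * complex_of_real t)) (Im (z + \<i> * complex_of_real t))) = (\<lambda>v. F (Re z) v) \<circ> (\<lambda>t. Im z + t)"
    by auto
  moreover have "((\<lambda>t. Im z + t) has_vector_derivative 1) (at 0)"
    by (auto intro!: derivative_eq_intros)
  then have "((\<lambda>v. F (Re z) v) \<circ> (\<lambda>t. Im z + t) has_vector_derivative F\<^sub>v (Re z) (Im z)) (at 0)"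
    using vector_diff_chain_at assms by fastforce
  ultimately show "partial_v (\<lambda>z. F (Re z) (Im z)) z = F\<^sub>v (Re z) (Im z)"
    unfolding partial_v_def by (simp add: vector_derivative_at)
qed

lemma metric_orthogonal_imp_independent:
  assumes x: "metric l1 l2 p x x > 0" and y: "metric l1 l2 p y y > 0" and xy: "metric l1 l2 p x y = 0"
  shows "independent {x, y} \<and> x \<noteq> y"
proof -
  have metric_scaleR: "metric l1 l2 p (t *\<^sub>R y) y = t * metric l1 l2 p y y" for t
    unfolding metric_def by (simp add: algebra_simps)
  have "x \<notin> span {y}"
  proof
    assume "x \<in> span {y}"
    then obtain t where t: "x = t *\<^sub>R y" by (auto simp: span_singleton)
    then have "t = 0" using xy y metric_scaleR[of t] by simp
    with x t show False by (simp add: metric_def)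
  qed
  moreover have "y \<noteq> 0" using y by (auto simp: metric_def)
  moreover have "x \<noteq> y" using x xy by auto
  ultimately show ?thesis by (simp add: independent_insert)
qed

lemma conformal_harmonic_imp_minimal_surface:
  assumes "conformal l1 l2 X"
    and "\<And>z. cov_deriv l1 l2 X partial_u (partial_u X) z + cov_deriv l1 l2 X partial_v (partial_v X) z = 0"
  shows "minimal_surface l1 l2 X"
  using assms unfolding minimal_surface_def conformal_def Let_def
  by (simp add: scaleR_add_right[symmetric] span_zero)

lemma exp_times_exp_i_eq_gauss_quotient:
  "exp (complex_of_real a) * exp (\<i> * complex_of_real t)
     = Complex (cos t / cosh a) (sin t / cosh a) / complex_of_real (1 - tanh a)"
proof -
  have denominator: "1 - tanh a = exp (- a) / cosh a"
    by (simp add: tanh_def field_simps flip: cosh_minus_sinh)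
  have numerator: "Complex (cos t / cosh a) (sin t / cosh a) = complex_of_real (1 / cosh a) * cis t"
    by (simp add: complex_eq_iff)
  show ?thesis
    unfolding denominator numerator cis_conv_exp exp_of_real by (simp add: field_simps exp_minus)
qed

section \<open>The solutions of the ODE system\<close>

lemma has_real_derivative_oriented_integral:
  assumes "continuous_on UNIV h"
  shows "((\<lambda>u. if 0 \<le> u then integral {0..u} h else - integral {u..0} h) has_real_derivative h u) (at u)"
proof -
  define a where "a = - (\<bar>u\<bar> + 1)"
  define b where "b = \<bar>u\<bar> + 1"
  have ab: "a < 0" "0 < b" "a < u" "u < b" unfolding a_def b_def by auto
  have integrable: "h integrable_on {x..y}" for x y
    by (rule integrable_continuous_interval) (rule continuous_on_subset[OF assms], simp)
  have "((\<lambda>x. integral {a..x} h) has_real_derivative h u) (at u within {a..b})"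
    by (rule integral_has_real_derivative) (use ab continuous_on_subset[OF assms] in auto)
  moreover have "at u within {a..b} = at u"
    by (rule at_within_interior) (use ab in simp)
  ultimately have d: "((\<lambda>x. integral {a..x} h - integral {a..0} h) has_real_derivative h u) (at u)"
    by (auto intro!: derivative_eq_intros)
  have eq: "integral {a..t} h - integral {a..0} h = (if 0 \<le> t then integral {0..t} h else - integral {t..0} h)"
    if "t \<in> {a<..<b}" for t
    using Henstock_Kurzweil_Integration.integral_combine[where a = a and c = 0 and b = t and f = h]
      Henstock_Kurzweil_Integration.integral_combine[where a = a and c = t and b = 0 and f = h]
      ab that integrable
    by (auto simp: algebra_simps)
  show ?thesis
    by (rule has_field_derivative_transform_within_open[OF d open_greaterThanLessThan _ eq]) (use ab in auto)
qed

lemma Omega_bound: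
  assumes "(c, \<theta>) \<in> Omega l1" and "l1 > 0"
  shows "c > 0" and "(1 - cos \<theta>) * l1\<^sup>2 < c\<^sup>2"
proof -
  show c: "c > 0" using assms(1) by (simp add: Omega_def)
  show "(1 - cos \<theta>) * l1\<^sup>2 < c\<^sup>2"
  proof (cases "c > sqrt 2 * l1")
    case True
    then have "2 * l1\<^sup>2 < c\<^sup>2"
      using assms(2) power_strict_mono[OF True, of 2] by (simp add: power_mult_distrib)
    moreover have "(1 - cos \<theta>) * l1\<^sup>2 \<le> 2 * l1\<^sup>2"
      using cos_ge_minus_one[of \<theta>] by (intro mult_right_mono) auto
    ultimately show ?thesis by linarith
  next
    case False
    define y where "y = 1 - c\<^sup>2 / l1\<^sup>2"
    have "\<bar>\<theta>\<bar> < arccos y"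
      using assms(1) False by (auto simp: Omega_def theta_plus_def y_def)
    have "c\<^sup>2 \<le> 2 * l1\<^sup>2"
      using power_mono[of c "sqrt 2 * l1" 2] False c by (simp add: power_mult_distrib)
    then have y: "-1 \<le> y" "y \<le> 1"
      using assms(2) by (simp_all add: y_def field_simps)
    have "cos (arccos y) < cos \<bar>\<theta>\<bar>"
      by (rule cos_monotone_0_pi) (use \<open>\<bar>\<theta>\<bar> < arccos y\<close> arccos_ubound[OF y] in auto)
    then have "y < cos \<theta>" using y by (simp add: cos_arccos)
    then show ?thesis using assms(2) by (simp add: y_def field_simps)
  qed
qed

text \<open>The radicand factors as \<open>(c\<^sup>2 - (1 - cos \<theta>) b) (c\<^sup>2 + (1 + cos \<theta>) b) / c\<^sup>2\<close>.\<close>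

lemma phi_radicand_pos:
  fixes c b l1 \<theta> :: real
  assumes c: "c > 0" and b: "0 < b" "b \<le> l1\<^sup>2" and bound: "(1 - cos \<theta>) * l1\<^sup>2 < c\<^sup>2"
  shows "0 < c\<^sup>2 + 2 * cos \<theta> * b - (sin \<theta> / c)\<^sup>2 * b\<^sup>2"
proof -
  have pyth: "(sin \<theta>)\<^sup>2 + (cos \<theta>)\<^sup>2 = 1" by simp
  have factor: "c\<^sup>2 * (c\<^sup>2 + 2 * cos \<theta> * b - (sin \<theta> / c)\<^sup>2 * b\<^sup>2)
      = (c\<^sup>2 - (1 - cos \<theta>) * b) * (c\<^sup>2 + (1 + cos \<theta>) * b)"
    using c by (simp add: field_simps) (use pyth in algebra)
  have "(1 - cos \<theta>) * b \<le> (1 - cos \<theta>) * l1\<^sup>2"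
    using b cos_le_one[of \<theta>] by (intro mult_left_mono) auto
  then have "c\<^sup>2 - (1 - cos \<theta>) * b > 0" using bound by linarith
  moreover have "0 \<le> (1 + cos \<theta>) * b"
    using b cos_ge_minus_one[of \<theta>] by (intro mult_nonneg_nonneg) linarith+
  then have "c\<^sup>2 + (1 + cos \<theta>) * b > 0"
    using c by (simp add: add_pos_nonneg)
  ultimately have "0 < c\<^sup>2 * (c\<^sup>2 + 2 * cos \<theta> * b - (sin \<theta> / c)\<^sup>2 * b\<^sup>2)"
    unfolding factor by (intro mult_pos_pos) linarith+
  then show ?thesis
    by (rule zero_less_mult_pos) (use c in simp)
qed

locale ode_solution =
  fixes l1 l2 c \<theta> :: real and \<phi> f :: "real \<Rightarrow> real"
  assumes admissible: "admissible_lambdas l1 l2"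
    and parameters: "(c, \<theta>) \<in> Omega l1"
    and phi_ode: "\<And>u. (\<phi> has_real_derivative
          sqrt (c\<^sup>2 + 2 * cos \<theta> * Bfun l1 l2 \<phi> u - (sin \<theta> / c)\<^sup>2 * (Bfun l1 l2 \<phi> u)\<^sup>2)) (at u)"
    and f_ode: "\<And>u. (f has_real_derivative (sin \<theta> / c) * Bfun l1 l2 \<phi> u) (at u)"
begin

definition "D = sin \<theta> / c"

definition "B u = l1\<^sup>2 * (cos (\<phi> u))\<^sup>2 + l2\<^sup>2 * (sin (\<phi> u))\<^sup>2"

text \<open>\<open>dphi\<close>, \<open>dG\<close> and \<open>ddG\<close> stand for \<open>\<phi>'\<close>, \<open>G'\<close> and \<open>G''\<close>; \<open>ddG\<close> is the closed form
  that the ODE forces on \<open>G''\<close>.\<close>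

definition "dphi u = sqrt (c\<^sup>2 + 2 * cos \<theta> * B u - D\<^sup>2 * (B u)\<^sup>2)"

definition "dG u = (c - dphi u) / B u"

definition "ddG u = (l2\<^sup>2 - l1\<^sup>2) * (D\<^sup>2 + (dG u)\<^sup>2) * sin (\<phi> u) * cos (\<phi> u)"

lemma Bfun_eq: "Bfun l1 l2 \<phi> = B"
  by (simp add: fun_eq_iff Bfun_def B_def)

lemma lambda_pos: "0 < l2" "l2 \<le> l1" "0 < l1"
  using admissible by (auto simp: admissible_lambdas_def)

lemma lambda_nonzero [simp]: "l1 \<noteq> 0" "l2 \<noteq> 0"
  using lambda_pos by auto

lemma c_pos: "0 < c"
  using Omega_bound(1)[OF parameters lambda_pos(3)] .

lemma B_bounds: "l2\<^sup>2 \<le> B u" "B u \<le> l1\<^sup>2"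
proof -
  have "0 \<le> l1\<^sup>2 - l2\<^sup>2"
    using lambda_pos by (simp add: power_mono)
  then have "0 \<le> (l1\<^sup>2 - l2\<^sup>2) * (cos (\<phi> u))\<^sup>2" "0 \<le> (l1\<^sup>2 - l2\<^sup>2) * (sin (\<phi> u))\<^sup>2"
    by simp_all
  moreover have "B u = l2\<^sup>2 + (l1\<^sup>2 - l2\<^sup>2) * (cos (\<phi> u))\<^sup>2" "B u = l1\<^sup>2 - (l1\<^sup>2 - l2\<^sup>2) * (sin (\<phi> u))\<^sup>2"
    unfolding B_def using sin_cos_squared_add[of "\<phi> u"] by algebra+
  ultimately show "l2\<^sup>2 \<le> B u" "B u \<le> l1\<^sup>2"
    by linarith+
qed

lemma B_pos: "0 < B u"
  using B_bounds(1)[of u] lambda_pos(1) by (meson less_le_trans zero_less_power)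

lemma B_nonzero [simp]: "B u \<noteq> 0"
  using B_pos[of u] by simp

lemma radicand_pos: "0 < c\<^sup>2 + 2 * cos \<theta> * B u - D\<^sup>2 * (B u)\<^sup>2"
  unfolding D_def
  using phi_radicand_pos[OF c_pos B_pos B_bounds(2) Omega_bound(2)[OF parameters lambda_pos(3)]] .

lemma dphi_squared: "(dphi u)\<^sup>2 = c\<^sup>2 + 2 * cos \<theta> * B u - D\<^sup>2 * (B u)\<^sup>2"
  using radicand_pos[of u] by (simp add: dphi_def)

lemma dphi_eq: "dphi u = c - B u * dG u"
  by (simp add: dG_def)

lemma has_real_derivative_phi: "(\<phi> has_real_derivative dphi u) (at u)"
  using phi_ode[of u] by (simp add: dphi_def D_def Bfun_eq)

lemma deriv_phi: "deriv \<phi> u = dphi u"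
  using has_real_derivative_phi by (rule DERIV_imp_deriv)

lemma has_real_derivative_f: "(f has_real_derivative D * B u) (at u)"
  using f_ode[of u] by (simp add: D_def Bfun_eq)

lemma has_real_derivative_B:
  "(B has_real_derivative 2 * (l2\<^sup>2 - l1\<^sup>2) * sin (\<phi> u) * cos (\<phi> u) * dphi u) (at u)"
  unfolding B_def[abs_def]
  by (auto intro!: derivative_eq_intros has_real_derivative_phi simp: algebra_simps power2_eq_square)

lemma has_real_derivative_dphi:
  "(dphi has_real_derivative 2 * (cos \<theta> - D\<^sup>2 * B u) * (l2\<^sup>2 - l1\<^sup>2) * sin (\<phi> u) * cos (\<phi> u)) (at u)"
proof -
  have "((\<lambda>u. c\<^sup>2 + 2 * cos \<theta> * B u - D\<^sup>2 * (B u)\<^sup>2) has_real_derivative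
      (2 * cos \<theta> - 2 * D\<^sup>2 * B u) * (2 * (l2\<^sup>2 - l1\<^sup>2) * sin (\<phi> u) * cos (\<phi> u) * dphi u)) (at u)"
    by (auto intro!: derivative_eq_intros has_real_derivative_B simp: algebra_simps power2_eq_square)
  from DERIV_chain2[OF DERIV_real_sqrt[OF radicand_pos] this]
  have d: "(dphi has_real_derivative inverse (dphi u) / 2 *
      ((2 * cos \<theta> - 2 * D\<^sup>2 * B u) * (2 * (l2\<^sup>2 - l1\<^sup>2) * sin (\<phi> u) * cos (\<phi> u) * dphi u))) (at u)"
    unfolding dphi_def[symmetric] .
  have "dphi u \<noteq> 0"
    using radicand_pos[of u] by (simp add: dphi_def)
  then have eq: "inverse (dphi u) / 2 *
      ((2 * cos \<theta> - 2 * D\<^sup>2 * B u) * (2 * (l2\<^sup>2 - l1\<^sup>2) * sin (\<phi> u) * cos (\<phi> u) * dphi u))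
      = 2 * (cos \<theta> - D\<^sup>2 * B u) * (l2\<^sup>2 - l1\<^sup>2) * sin (\<phi> u) * cos (\<phi> u)"
    by (simp add: field_simps)
  show ?thesis
    using d unfolding eq .
qed

lemma has_real_derivative_dG: "(dG has_real_derivative ddG u) (at u)"
proof -
  have "(dG has_real_derivative
      ((0 - 2 * (cos \<theta> - D\<^sup>2 * B u) * (l2\<^sup>2 - l1\<^sup>2) * sin (\<phi> u) * cos (\<phi> u)) * B u
       - (c - dphi u) * (2 * (l2\<^sup>2 - l1\<^sup>2) * sin (\<phi> u) * cos (\<phi> u) * dphi u)) / (B u * B u)) (at u)"
    unfolding dG_def[abs_def]
    by (rule DERIV_divide[OF DERIV_diff[OF DERIV_const has_real_derivative_dphi] has_real_derivative_B B_nonzero])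
  moreover have "((0 - 2 * (cos \<theta> - D\<^sup>2 * B u) * (l2\<^sup>2 - l1\<^sup>2) * sin (\<phi> u) * cos (\<phi> u)) * B u
       - (c - dphi u) * (2 * (l2\<^sup>2 - l1\<^sup>2) * sin (\<phi> u) * cos (\<phi> u) * dphi u)) / (B u * B u) = ddG u"
    unfolding ddG_def dG_def by (simp add: field_simps) (use dphi_squared[of u] in algebra)
  ultimately show ?thesis by simp
qed

lemma has_real_derivative_G: "(Gfun l1 l2 c \<phi> has_real_derivative dG u) (at u)"
proof -
  have "Gfun l1 l2 c \<phi> = (\<lambda>u. if 0 \<le> u then integral {0..u} dG else - integral {u..0} dG)"
    by (simp add: fun_eq_iff Gfun_def deriv_phi Bfun_eq flip: dG_def)
  moreover have "continuous_on UNIV dG"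
    using has_real_derivative_dG
    by (intro continuous_at_imp_continuous_on ballI DERIV_isCont) blast
  ultimately show ?thesis
    by (simp add: has_real_derivative_oriented_integral)
qed

section \<open>The surface\<close>

definition "A u v = f u + c * v"

definition "x3 u v = l1 * l2 * (Gfun l1 l2 c \<phi> u - D * v)"

definition "a1 u v = rot1 (\<phi> u) (dG u * sinh (A u v)) (- D * cosh (A u v))"
definition "a2 u v = rot2 (\<phi> u) (dG u * sinh (A u v)) (- D * cosh (A u v))"
definition "b1 u v = rot1 (\<phi> u) (- D * sinh (A u v)) (- dG u * cosh (A u v))"
definition "b2 u v = rot2 (\<phi> u) (- D * sinh (A u v)) (- dG u * cosh (A u v))"

lemma A_du: "((\<lambda>u. A u v) has_real_derivative D * B u) (at u)"
  unfolding A_def by (auto intro!: derivative_eq_intros has_real_derivative_f)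

lemma A_dv: "((\<lambda>v. A u v) has_real_derivative c) (at v)"
  unfolding A_def by (auto intro!: derivative_eq_intros)

lemma x3_du: "((\<lambda>u. x3 u v) has_real_derivative l1 * l2 * dG u) (at u)"
  unfolding x3_def by (auto intro!: derivative_eq_intros has_real_derivative_G)

lemma x3_dv: "((\<lambda>v. x3 u v) has_real_derivative - (l1 * l2 * D)) (at v)"
  unfolding x3_def by (auto intro!: derivative_eq_intros)

text \<open>Since \<open>\<phi>' = c - B G'\<close> (\<open>dphi_eq\<close>), the frame components of \<open>X\<^sub>u\<close> and \<open>X\<^sub>v\<close> satisfy
  a linear system.\<close>

lemma a1_du: "((\<lambda>u. a1 u v) has_real_derivative (l2\<^sup>2 * dG u - c) * a2 u v - l2\<^sup>2 * D * b2 u v) (at u)"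
  unfolding a1_def rot1_def
  by (rule derivative_eq_intros has_real_derivative_phi has_real_derivative_dG A_du refl)+
     (simp only: a2_def b2_def rot2_def dphi_eq ddG_def B_def; use sin_cos_squared_add[of "\<phi> u"] in algebra)

lemma a2_du: "((\<lambda>u. a2 u v) has_real_derivative (c - l1\<^sup>2 * dG u) * a1 u v + l1\<^sup>2 * D * b1 u v) (at u)"
  unfolding a2_def rot2_def
  by (rule derivative_eq_intros has_real_derivative_phi has_real_derivative_dG A_du refl)+
     (simp only: a1_def b1_def rot1_def dphi_eq ddG_def B_def; use sin_cos_squared_add[of "\<phi> u"] in algebra)

lemma b1_du: "((\<lambda>u. b1 u v) has_real_derivative (l1\<^sup>2 * dG u - c) * b2 u v + l1\<^sup>2 * D * a2 u v) (at u)"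
  unfolding b1_def rot1_def
  by (rule derivative_eq_intros has_real_derivative_phi has_real_derivative_dG A_du refl)+
     (simp only: a2_def b2_def rot2_def dphi_eq ddG_def B_def; use sin_cos_squared_add[of "\<phi> u"] in algebra)

lemma b2_du: "((\<lambda>u. b2 u v) has_real_derivative (c - l2\<^sup>2 * dG u) * b1 u v - l2\<^sup>2 * D * a1 u v) (at u)"
  unfolding b2_def rot2_def
  by (rule derivative_eq_intros has_real_derivative_phi has_real_derivative_dG A_du refl)+
     (simp only: a1_def b1_def rot1_def dphi_eq ddG_def B_def; use sin_cos_squared_add[of "\<phi> u"] in algebra)

lemma a1_dv: "((\<lambda>v. a1 u v) has_real_derivative - c * b2 u v) (at v)"
  unfolding a1_def b2_def rot1_def rot2_def
  by (auto intro!: derivative_eq_intros A_dv simp: algebra_simps)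

lemma a2_dv: "((\<lambda>v. a2 u v) has_real_derivative c * b1 u v) (at v)"
  unfolding a2_def b1_def rot1_def rot2_def
  by (auto intro!: derivative_eq_intros A_dv simp: algebra_simps)

lemma b1_dv: "((\<lambda>v. b1 u v) has_real_derivative c * a2 u v) (at v)"
  unfolding b1_def a2_def rot1_def rot2_def
  by (auto intro!: derivative_eq_intros A_dv simp: algebra_simps)

lemma b2_dv: "((\<lambda>v. b2 u v) has_real_derivative - c * a1 u v) (at v)"
  unfolding b2_def a1_def rot1_def rot2_def
  by (auto intro!: derivative_eq_intros A_dv simp: algebra_simps)

definition "K = c\<^sup>2 + (l1 * l2 * D)\<^sup>2"

lemma K_pos: "0 < K"
  unfolding K_def using c_pos by (simp add: add_pos_nonneg)

lemma K_nonzero [simp]: "K \<noteq> 0"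
  using K_pos by simp

text \<open>The coordinates \<open>(x\<^sub>1, x\<^sub>2)\<close> of the paper are \<open>(w1, w2)\<close> rotated by \<open>x\<^sub>3\<close>.\<close>

definition "w1 u v = (c * a2 u v / l1 - l1 * D * b2 u v) / K"
definition "w2 u v = (l2 * D * b1 u v - c * a1 u v / l2) / K"

text \<open>\<open>Xc\<close> is \<open>X\<close> in the real coordinates \<open>u = Re z\<close>, \<open>v = Im z\<close>; \<open>Xc_u\<close>, \<open>Xc_v\<close>, \<open>Xc_uu\<close>, \<open>Xc_uv\<close>
  and \<open>Xc_vv\<close> are its partial derivatives.\<close>

definition "Xc u v = (vector [rot1 (x3 u v) (w1 u v) (w2 u v), rot2 (x3 u v) (w1 u v) (w2 u v), x3 u v] :: real^3)"
definition "Xc_u u v = frame_vector l1 l2 (x3 u v) (a1 u v) (a2 u v) (dG u)"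
definition "Xc_v u v = frame_vector l1 l2 (x3 u v) (b1 u v) (b2 u v) (- D)"
definition "Xc_uu u v = frame_vector l1 l2 (x3 u v)
  (((l2\<^sup>2 - l1\<^sup>2) * dG u - c) * a2 u v - l2\<^sup>2 * D * b2 u v)
  ((c + (l2\<^sup>2 - l1\<^sup>2) * dG u) * a1 u v + l1\<^sup>2 * D * b1 u v) (ddG u)"
definition "Xc_uv u v = frame_vector l1 l2 (x3 u v)
  (l1\<^sup>2 * D * a2 u v - c * b2 u v) (c * b1 u v - l2\<^sup>2 * D * a1 u v) 0"
definition "Xc_vv u v = frame_vector l1 l2 (x3 u v)
  (c * a2 u v + l1\<^sup>2 * D * b2 u v) (- c * a1 u v - l2\<^sup>2 * D * b1 u v) 0"

lemma w1_du: "((\<lambda>u. w1 u v) has_real_derivative a1 u v / l1 + l1 * l2 * dG u * w2 u v) (at u)"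
  unfolding w1_def
  by (auto intro!: derivative_eq_intros a2_du b2_du simp: w2_def field_simps;
      simp add: K_def algebra_simps power2_eq_square)

lemma w2_du: "((\<lambda>u. w2 u v) has_real_derivative a2 u v / l2 - l1 * l2 * dG u * w1 u v) (at u)"
  unfolding w2_def
  by (auto intro!: derivative_eq_intros a1_du b1_du simp: w1_def field_simps;
      simp add: K_def algebra_simps power2_eq_square)

lemma w1_dv: "((\<lambda>v. w1 u v) has_real_derivative b1 u v / l1 - l1 * l2 * D * w2 u v) (at v)"
  unfolding w1_def
  by (auto intro!: derivative_eq_intros a2_dv b2_dv simp: w2_def field_simps;
      simp add: K_def algebra_simps power2_eq_square)

lemma w2_dv: "((\<lambda>v. w2 u v) has_real_derivative b2 u v / l2 + l1 * l2 * D * w1 u v) (at v)"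
  unfolding w2_def
  by (auto intro!: derivative_eq_intros a1_dv b1_dv simp: w1_def field_simps;
      simp add: K_def algebra_simps power2_eq_square)

lemma Xc_du: "((\<lambda>u. Xc u v) has_vector_derivative Xc_u u v) (at u)"
  using has_vector_derivative_vector3[OF has_real_derivative_rot1[OF x3_du[of v] w1_du[of v] w2_du[of v]]
      has_real_derivative_rot2[OF x3_du[of v] w1_du[of v] w2_du[of v]] x3_du[of v]]
  by (simp add: Xc_def Xc_u_def frame_vector_def)

lemma Xc_dv: "((\<lambda>v. Xc u v) has_vector_derivative Xc_v u v) (at v)"
  using has_vector_derivative_vector3[OF has_real_derivative_rot1[OF x3_dv[of u] w1_dv[of u] w2_dv[of u]]
      has_real_derivative_rot2[OF x3_dv[of u] w1_dv[of u] w2_dv[of u]] x3_dv[of u]]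
  by (simp add: Xc_def Xc_v_def frame_vector_def)

lemma Xmap_eq: "Xmap l1 l2 c \<theta> \<phi> f z = Xc (Re z) (Im z)"
proof -
  have x3: "- (l1 * l2) * D * Im z + l1 * l2 * Gfun l1 l2 c \<phi> (Re z) = x3 (Re z) (Im z)"
    by (simp add: x3_def algebra_simps)
  have K: "c\<^sup>2 + (l1 * l2)\<^sup>2 * D\<^sup>2 = K"
    by (simp add: K_def power_mult_distrib)
  have f': "deriv f (Re z) = D * B (Re z)" and phi': "c - deriv \<phi> (Re z) = B (Re z) * dG (Re z)"
    using DERIV_imp_deriv[OF has_real_derivative_f] by (simp_all add: deriv_phi dphi_eq)
  show ?thesis
    unfolding Xmap_def Let_def Xc_def vector3_eq_iff Bfun_eq D_def[symmetric] A_def[symmetric] x3 K f' phi'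
    by (simp add: w1_def w2_def a1_def a2_def b1_def b2_def rot1_def rot2_def field_simps)
qed

lemma Xc_u_du: "((\<lambda>u. Xc_u u v) has_vector_derivative Xc_uu u v) (at u)"
  using has_vector_derivative_frame_vector[OF lambda_nonzero x3_du[of v] a1_du[of v] a2_du[of v] has_real_derivative_dG]
  by (simp add: Xc_u_def Xc_uu_def power2_eq_square algebra_simps)

lemma Xc_u_dv: "((\<lambda>v. Xc_u u v) has_vector_derivative Xc_uv u v) (at v)"
  using has_vector_derivative_frame_vector[OF lambda_nonzero x3_dv[of u] a1_dv[of u] a2_dv[of u] DERIV_const]
  by (simp add: Xc_u_def Xc_uv_def power2_eq_square algebra_simps)

lemma Xc_v_du: "((\<lambda>u. Xc_v u v) has_vector_derivative Xc_uv u v) (at u)"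
  using has_vector_derivative_frame_vector[OF lambda_nonzero x3_du[of v] b1_du[of v] b2_du[of v] DERIV_const]
  by (simp add: Xc_v_def Xc_uv_def power2_eq_square algebra_simps)

lemma Xc_v_dv: "((\<lambda>v. Xc_v u v) has_vector_derivative Xc_vv u v) (at v)"
  using has_vector_derivative_frame_vector[OF lambda_nonzero x3_dv[of u] b1_dv[of u] b2_dv[of u] DERIV_const]
  by (simp add: Xc_v_def Xc_vv_def power2_eq_square algebra_simps)

lemma Xc_3: "Xc u v $ 3 = x3 u v"
  by (simp add: Xc_def)

lemma metric_Xc:
  "metric l1 l2 (Xc u v) (Xc_u u v) (Xc_u u v) = (D\<^sup>2 + (dG u)\<^sup>2) * (cosh (A u v))\<^sup>2"
  "metric l1 l2 (Xc u v) (Xc_v u v) (Xc_v u v) = (D\<^sup>2 + (dG u)\<^sup>2) * (cosh (A u v))\<^sup>2"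
  "metric l1 l2 (Xc u v) (Xc_u u v) (Xc_v u v) = 0"
proof -
  have "a1 u v * a1 u v + a2 u v * a2 u v + dG u * dG u = (D\<^sup>2 + (dG u)\<^sup>2) * (cosh (A u v))\<^sup>2"
    "b1 u v * b1 u v + b2 u v * b2 u v + - D * - D = (D\<^sup>2 + (dG u)\<^sup>2) * (cosh (A u v))\<^sup>2"
    "a1 u v * b1 u v + a2 u v * b2 u v + dG u * - D = 0"
    using cosh_square_eq[of "A u v"] unfolding a1_def a2_def b1_def b2_def rot_inner by algebra+
  then show "metric l1 l2 (Xc u v) (Xc_u u v) (Xc_u u v) = (D\<^sup>2 + (dG u)\<^sup>2) * (cosh (A u v))\<^sup>2"
    "metric l1 l2 (Xc u v) (Xc_v u v) (Xc_v u v) = (D\<^sup>2 + (dG u)\<^sup>2) * (cosh (A u v))\<^sup>2"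
    "metric l1 l2 (Xc u v) (Xc_u u v) (Xc_v u v) = 0"
    unfolding Xc_u_def Xc_v_def Xc_3[symmetric] metric_frame_vector[OF lambda_nonzero] .
qed

lemma a_b_cross: "a1 u v * a2 u v + b1 u v * b2 u v = - (D\<^sup>2 + (dG u)\<^sup>2) * sin (\<phi> u) * cos (\<phi> u)"
proof -
  have "(cosh (A u v))\<^sup>2 - (sinh (A u v))\<^sup>2 = 1" by (simp add: hyperbolic_pythagoras)
  then show ?thesis
    unfolding a1_def a2_def b1_def b2_def rot1_def rot2_def by algebra
qed

lemma harmonic_Xc:
  "(Xc_uu u v + (l1\<^sup>2 - l2\<^sup>2) *\<^sub>R frame_vector l1 l2 (x3 u v) (a2 u v * dG u) (a1 u v * dG u) (- a1 u v * a2 u v))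
   + (Xc_vv u v + (l1\<^sup>2 - l2\<^sup>2) *\<^sub>R frame_vector l1 l2 (x3 u v) (b2 u v * - D) (b1 u v * - D) (- b1 u v * b2 u v))
   = 0"
proof -
  have "ddG u - (l1\<^sup>2 - l2\<^sup>2) * (a1 u v * a2 u v + b1 u v * b2 u v) = 0"
    unfolding a_b_cross ddG_def by algebra
  then show ?thesis
    unfolding Xc_uu_def Xc_vv_def frame_vector_scaleR frame_vector_add
    by (simp add: algebra_simps flip: frame_vector_zero[of l1 l2 "x3 u v"])
qed

lemma D_dG_pos: "0 < D\<^sup>2 + (dG u)\<^sup>2"
proof (rule ccontr)
  assume "\<not> ?thesis"
  then have "D = 0" "dG u = 0"
    using sum_power2_le_zero_iff[of D "dG u"] by auto
  then have "sin \<theta> = 0" "(dphi u)\<^sup>2 = c\<^sup>2"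
    using c_pos by (simp_all add: D_def dphi_eq)
  then have "sin \<theta> = 0" "cos \<theta> = 0"
    using dphi_squared[of u] \<open>D = 0\<close> by simp_all
  then show False
    using sin_cos_squared_add[of \<theta>] by simp
qed

abbreviation "X \<equiv> Xmap l1 l2 c \<theta> \<phi> f"

lemma X_eq: "X = (\<lambda>z. Xc (Re z) (Im z))"
  by (simp add: fun_eq_iff Xmap_eq)

lemma partial_derivatives_Xc:
  "partial_u (\<lambda>z. Xc (Re z) (Im z)) = (\<lambda>z. Xc_u (Re z) (Im z))"
  "partial_v (\<lambda>z. Xc (Re z) (Im z)) = (\<lambda>z. Xc_v (Re z) (Im z))"
  "partial_u (\<lambda>z. Xc_u (Re z) (Im z)) = (\<lambda>z. Xc_uu (Re z) (Im z))"
  "partial_v (\<lambda>z. Xc_u (Re z) (Im z)) = (\<lambda>z. Xc_uv (Re z) (Im z))"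
  "partial_u (\<lambda>z. Xc_v (Re z) (Im z)) = (\<lambda>z. Xc_uv (Re z) (Im z))"
  "partial_v (\<lambda>z. Xc_v (Re z) (Im z)) = (\<lambda>z. Xc_vv (Re z) (Im z))"
  by (simp_all add: partial_u_coordinates[of Xc, OF Xc_du] partial_v_coordinates[of Xc, OF Xc_dv]
      partial_u_coordinates[of Xc_u, OF Xc_u_du] partial_v_coordinates[of Xc_u, OF Xc_u_dv]
      partial_u_coordinates[of Xc_v, OF Xc_v_du] partial_v_coordinates[of Xc_v, OF Xc_v_dv])

lemma conformal_X: "conformal l1 l2 X"
  by (simp add: conformal_def X_eq partial_derivatives_Xc metric_Xc)

lemma harmonic_X:
  "cov_deriv l1 l2 X partial_u (partial_u X) z + cov_deriv l1 l2 X partial_v (partial_v X) z = 0"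
proof -
  have "partial_u X z = frame_vector l1 l2 (X z $ 3) (a1 (Re z) (Im z)) (a2 (Re z) (Im z)) (dG (Re z))"
    "partial_v X z = frame_vector l1 l2 (X z $ 3) (b1 (Re z) (Im z)) (b2 (Re z) (Im z)) (- D)"
    by (simp_all add: X_eq partial_derivatives_Xc Xc_3 Xc_u_def Xc_v_def)
  from cov_deriv_frame_vector[of l1 l2 partial_u X, OF lambda_nonzero this(1)]
    cov_deriv_frame_vector[of l1 l2 partial_v X, OF lambda_nonzero this(2)]
  show ?thesis
    using harmonic_Xc[of "Re z" "Im z"] by (simp add: X_eq partial_derivatives_Xc Xc_3)
qed

lemma minimal_X: "minimal_surface l1 l2 X"
  using conformal_harmonic_imp_minimal_surface[OF conformal_X harmonic_X] .

lemmas differentiable_ode [derivative_intros] =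
  differentiable_compose_real[OF has_real_derivative_phi] differentiable_compose_real[OF has_real_derivative_f]
  differentiable_compose_real[OF has_real_derivative_G] differentiable_compose_real[OF has_real_derivative_dG]

lemma differentiable_coordinate_maps:
  "(\<lambda>z. Xc (Re z) (Im z)) differentiable (at z)"
  "(\<lambda>z. Xc_u (Re z) (Im z)) differentiable (at z)"
  "(\<lambda>z. Xc_v (Re z) (Im z)) differentiable (at z)"
  "(\<lambda>z. Xc_uu (Re z) (Im z)) differentiable (at z)"
  "(\<lambda>z. Xc_uv (Re z) (Im z)) differentiable (at z)"
  "(\<lambda>z. Xc_vv (Re z) (Im z)) differentiable (at z)"
  unfolding Xc_def Xc_u_def Xc_v_def Xc_uu_def Xc_uv_def Xc_vv_def frame_vector_def rot1_def rot2_def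
    x3_def w1_def w2_def a1_def a2_def b1_def b2_def A_def ddG_def
  by (auto intro!: derivative_intros)

lemma C2_immersion_X: "C2_immersion X"
proof -
  have "independent {partial_u X z, partial_v X z} \<and> partial_u X z \<noteq> partial_v X z" for z
    using D_dG_pos[of "Re z"]
    by (intro metric_orthogonal_imp_independent[of l1 l2 "X z"])
       (simp_all add: X_eq partial_derivatives_Xc metric_Xc)
  then show ?thesis
    unfolding C2_immersion_def X_eq partial_derivatives_Xc
    by (simp add: differentiable_coordinate_maps continuous_on_UNIV_if_differentiable)
qed

definition "unit_normal_components u v =
  (vector [rot1 (\<phi> u) (1 / cosh (A u v)) 0, rot2 (\<phi> u) (1 / cosh (A u v)) 0, - tanh (A u v)] :: real^3)"

lemma unit_normal_orthonormal:
  fixes u v :: real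
  defines "n \<equiv> unit_normal_components u v"
  shows "n $ 1 * n $ 1 + n $ 2 * n $ 2 + n $ 3 * n $ 3 = 1"
    and "n $ 1 * a1 u v + n $ 2 * a2 u v + n $ 3 * dG u = 0"
    and "n $ 1 * b1 u v + n $ 2 * b2 u v + n $ 3 * - D = 0"
  unfolding n_def unit_normal_components_def a1_def a2_def b1_def b2_def vector_3 rot_inner
  by (simp_all add: tanh_def field_simps) (use cosh_square_eq[of "A u v"] in algebra)

lemma gauss_map_X:
  "has_gauss_map l1 l2 X (\<lambda>z. exp (complex_of_real (f (Re z) + c * Im z)) * exp (\<i> * complex_of_real (\<phi> (Re z))))"
  unfolding has_gauss_map_def
proof (intro exI allI conjI)
  fix z
  let ?n = "\<lambda>z. unit_normal_components (Re z) (Im z)"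
  let ?N = "\<lambda>z. \<Sum>k\<in>UNIV. ?n z $ k *\<^sub>R frame l1 l2 (X z) k"
  show "?N z = (\<Sum>k\<in>UNIV. ?n z $ k *\<^sub>R frame l1 l2 (X z) k)" ..
  show "metric l1 l2 (X z) (?N z) (?N z) = 1"
    "metric l1 l2 (X z) (?N z) (partial_u X z) = 0"
    "metric l1 l2 (X z) (?N z) (partial_v X z) = 0"
    using unit_normal_orthonormal[of "Re z" "Im z"]
    by (simp_all add: sum_frame_eq_frame_vector X_eq partial_derivatives_Xc Xc_u_def Xc_v_def
        metric_frame_vector flip: Xc_3)
  show "exp (complex_of_real (f (Re z) + c * Im z)) * exp (\<i> * complex_of_real (\<phi> (Re z)))
      = Complex (?n z $ 1) (?n z $ 2) / complex_of_real (1 + ?n z $ 3)"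
    using exp_times_exp_i_eq_gauss_quotient[of "f (Re z) + c * Im z" "\<phi> (Re z)"]
    by (simp add: unit_normal_components_def A_def rot1_def rot2_def)
qed

end

theorem theorem5p1:
  fixes l1 l2 c \<theta> :: real and \<phi> f :: "real \<Rightarrow> real"
  assumes lam: "admissible_lambdas l1 l2"
    and ct: "(c, \<theta>) \<in> Omega l1"
    and phi0: "\<phi> 0 = 0"
    and phi_ode: "\<And>u. (\<phi> has_real_derivative
          sqrt (c\<^sup>2 + 2 * cos \<theta> * Bfun l1 l2 \<phi> u - (sin \<theta> / c)\<^sup>2 * (Bfun l1 l2 \<phi> u)\<^sup>2)) (at u)"
    and f0: "f 0 = 0"
    and f_ode: "\<And>u. (f has_real_derivative (sin \<theta> / c) * Bfun l1 l2 \<phi> u) (at u)"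
  shows "conformal_minimal_immersion l1 l2 (Xmap l1 l2 c \<theta> \<phi> f) \<and>
         has_gauss_map l1 l2 (Xmap l1 l2 c \<theta> \<phi> f)
           (\<lambda>z. exp (complex_of_real (f (Re z) + c * Im z)) * exp (\<i> * complex_of_real (\<phi> (Re z))))"
proof -
  \<comment> \<open>The initial values \<open>phi0\<close> and \<open>f0\<close> only single out one solution.\<close>
  interpret ode_solution l1 l2 c \<theta> \<phi> f
    using lam ct phi_ode f_ode by unfold_locales
  show ?thesis
    unfolding conformal_minimal_immersion_def
    using C2_immersion_X conformal_X minimal_X gauss_map_X by blast
qed

end
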